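(* When the algorithm Classifier is run on any configuration $G$ with $n$ nodes, there exists an iteration $i\in\{1,\ldots,\lceil n/2\rceil\}$ of its main loop in which either the "Yes" condition or the "No" condition holds, so that Classifier terminates with an output.
   Context: A configuration is a finite simple undirected connected graph $G$ with $n$ nodes, each node $v$ having a non-negative integer wakeup tag $t_v$; the span $\sigma$ is the largest tag (the smallest tag being $0$). Algorithm Classifier (centralized, input $G$). It maintains a partition of the nodes into classes, with $\mathrm{class}(v)\in\{1,\ldots,\mathit{numClasses}\}$. Initially all nodes are in class $1$ and $\mathit{numClasses}=1$. One iteration (procedure Partitioner) does: for each node $v$, compute its label $L_v$, the set of triples obtained as follows: for each neighbour $w$ of $v$ with $\mathrm{class}(w)\ne\mathrm{class}(v)$ or $t_w\ne t_v$, form the pair $(\mathrm{class}(w),\sigma+1+t_w-t_v)$; for each distinct pair $(a,b)$ so formed, $L_v$ contains $(a,b,1)$ if exactly one such neighbour yields $(a,b)$ and $(a,b,* )$ if at least two do. Then the partition is refined: two nodes are in the same new class iff they were in the same class before the iteration and have equal labels; classes are renumbered $1,\ldots,\mathit{numClasses}$ with $\mathit{numClasses}$ the new number of classes. Main loop: for $i=1,\ldots,\lceil n/2\rceil$: let $\mathit{old}=\mathit{numClasses}$; perform one iteration; if some class contains exactly one node, output "Yes" and stop (the "Yes" condition); otherwise, if $\mathit{numClasses}=\mathit{old}$, output "No" and stop (the "No" condition). *)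

theory Defs
  imports Main
begin

definition configuration :: "'a set \<Rightarrow> ('a \<Rightarrow> 'a \<Rightarrow> bool) \<Rightarrow> ('a \<Rightarrow> nat) \<Rightarrow> bool" where
  "configuration V E t \<longleftrightarrow>
     finite V \<and> V \<noteq> {} \<and>
     (\<forall>u v. E u v \<longrightarrow> u \<in> V \<and> v \<in> V) \<and>
     (\<forall>u v. E u v \<longrightarrow> E v u) \<and>
     (\<forall>v. \<not> E v v) \<and>
     (\<forall>u\<in>V. \<forall>v\<in>V. E\<^sup>*\<^sup>* u v) \<and>
     (\<exists>v\<in>V. t v = 0)"

definition span :: "'a set \<Rightarrow> ('a \<Rightarrow> nat) \<Rightarrow> nat" where
  "span V t = Max (t ` V)"

datatype mult = One | Many

text \<open>A partition of V is represented by the map sending each node to its class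
  (the set of nodes in its class); the class itself serves as canonical class identifier.\<close>

definition rel_nbrs :: "'a set \<Rightarrow> ('a \<Rightarrow> 'a \<Rightarrow> bool) \<Rightarrow> ('a \<Rightarrow> nat) \<Rightarrow> ('a \<Rightarrow> 'a set) \<Rightarrow> 'a \<Rightarrow> 'a set" where
  "rel_nbrs V E t cls v = {w \<in> V. E v w \<and> (cls w \<noteq> cls v \<or> t w \<noteq> t v)}"

definition nbr_pair :: "'a set \<Rightarrow> ('a \<Rightarrow> nat) \<Rightarrow> ('a \<Rightarrow> 'a set) \<Rightarrow> 'a \<Rightarrow> 'a \<Rightarrow> 'a set \<times> int" where
  "nbr_pair V t cls v w = (cls w, int (span V t) + 1 + int (t w) - int (t v))"

definition label :: "'a set \<Rightarrow> ('a \<Rightarrow> 'a \<Rightarrow> bool) \<Rightarrow> ('a \<Rightarrow> nat) \<Rightarrow> ('a \<Rightarrow> 'a set) \<Rightarrow> 'a \<Rightarrow> ('a set \<times> int \<times> mult) set" where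
  "label V E t cls v =
     {(a, b, m). (\<exists>w \<in> rel_nbrs V E t cls v. nbr_pair V t cls v w = (a, b)) \<and>
        m = (if card {w \<in> rel_nbrs V E t cls v. nbr_pair V t cls v w = (a, b)} = 1
             then One else Many)}"

definition partitioner :: "'a set \<Rightarrow> ('a \<Rightarrow> 'a \<Rightarrow> bool) \<Rightarrow> ('a \<Rightarrow> nat) \<Rightarrow> ('a \<Rightarrow> 'a set) \<Rightarrow> ('a \<Rightarrow> 'a set)" where
  "partitioner V E t cls = (\<lambda>v. {u \<in> V. cls u = cls v \<and> label V E t cls u = label V E t cls v})"

definition classes_after :: "'a set \<Rightarrow> ('a \<Rightarrow> 'a \<Rightarrow> bool) \<Rightarrow> ('a \<Rightarrow> nat) \<Rightarrow> nat \<Rightarrow> ('a \<Rightarrow> 'a set)" where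
  "classes_after V E t k = (partitioner V E t ^^ k) (\<lambda>_. V)"

definition num_classes :: "'a set \<Rightarrow> ('a \<Rightarrow> 'a \<Rightarrow> bool) \<Rightarrow> ('a \<Rightarrow> nat) \<Rightarrow> nat \<Rightarrow> nat" where
  "num_classes V E t k = card (classes_after V E t k ` V)"

definition yes_cond :: "'a set \<Rightarrow> ('a \<Rightarrow> 'a \<Rightarrow> bool) \<Rightarrow> ('a \<Rightarrow> nat) \<Rightarrow> nat \<Rightarrow> bool" where
  "yes_cond V E t i \<longleftrightarrow> (\<exists>v \<in> V. card (classes_after V E t i v) = 1)"

definition no_cond :: "'a set \<Rightarrow> ('a \<Rightarrow> 'a \<Rightarrow> bool) \<Rightarrow> ('a \<Rightarrow> nat) \<Rightarrow> nat \<Rightarrow> bool" where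
  "no_cond V E t i \<longleftrightarrow> num_classes V E t i = num_classes V E t (i - 1)"

end

theory Submission
  imports Defs
begin

text \<open>Each iteration refines the partition, so the number of classes never decreases; if the
  "No" condition fails in iterations \<open>1, \<dots>, \<lceil>n/2\<rceil>\<close>, it grows strictly each time
  and exceeds \<open>\<lceil>n/2\<rceil>\<close>. If moreover the "Yes" condition fails in the last of these
  iterations, every class has at least two nodes, so there are at most \<open>n/2\<close> classes.\<close>

definition class_map :: "'a set \<Rightarrow> ('a \<Rightarrow> 'a set) \<Rightarrow> bool" where
  "class_map V cls \<longleftrightarrow>
     (\<forall>v\<in>V. v \<in> cls v \<and> cls v \<subseteq> V \<and> (\<forall>u\<in>V. u \<in> cls v \<longleftrightarrow> cls u = cls v))"

lemma class_map_const: "class_map V (\<lambda>_. V)"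
  unfolding class_map_def by auto

lemma class_map_partitioner: "class_map V (partitioner V E t cls)"
  unfolding class_map_def partitioner_def by auto

lemma classes_after_0: "classes_after V E t 0 = (\<lambda>_. V)"
  unfolding classes_after_def by simp

lemma classes_after_Suc:
  "classes_after V E t (Suc k) = partitioner V E t (classes_after V E t k)"
  unfolding classes_after_def by simp

lemma class_map_classes_after: "class_map V (classes_after V E t k)"
  by (cases k) (simp_all add: classes_after_0 classes_after_Suc class_map_const class_map_partitioner)

lemma partitioner_refines:
  assumes "u \<in> V" "partitioner V E t cls u = partitioner V E t cls v"
  shows "cls u = cls v"
proof -
  have "u \<in> partitioner V E t cls u" using assms(1) unfolding partitioner_def by simp
  then show ?thesis using assms(2) unfolding partitioner_def by simp
qed

lemma card_image_le_if_finer: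
  assumes "finite V" and finer: "\<And>u v. u \<in> V \<Longrightarrow> v \<in> V \<Longrightarrow> f u = f v \<Longrightarrow> g u = g v"
  shows "card (g ` V) \<le> card (f ` V)"
proof (rule surj_card_le)
  show "g ` V \<subseteq> (\<lambda>x. g (inv_into V f x)) ` f ` V"
  proof
    fix y assume "y \<in> g ` V"
    then obtain v where v: "v \<in> V" "y = g v" by blast
    then have "g (inv_into V f (f v)) = y"
      using finer[of "inv_into V f (f v)" v] by (simp add: inv_into_into f_inv_into_f)
    then show "y \<in> (\<lambda>x. g (inv_into V f x)) ` f ` V" using v by blast
  qed
qed (use assms in simp)

lemma num_classes_Suc_ge:
  assumes "finite V"
  shows "num_classes V E t k \<le> num_classes V E t (Suc k)"
  unfolding num_classes_def classes_after_Suc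
  using assms by (rule card_image_le_if_finer) (rule partitioner_refines)

lemma num_classes_ge_if_not_no_cond:
  assumes "finite V" "V \<noteq> {}" "\<forall>i\<in>{1..k}. \<not> no_cond V E t i"
  shows "k + 1 \<le> num_classes V E t k"
  using assms(3)
proof (induction k)
  case 0
  have "(\<lambda>_. V) ` V = {V}" using assms(2) by blast
  then show ?case by (simp add: num_classes_def classes_after_0)
next
  case (Suc k)
  then have "\<not> no_cond V E t (Suc k)" by simp
  then have "num_classes V E t (Suc k) \<noteq> num_classes V E t k"
    by (simp add: no_cond_def)
  with Suc num_classes_Suc_ge[OF assms(1), of E t k] show ?case by fastforce
qed

lemma card_Union_ge_two_mul_card:
  assumes "finite (\<Union>P)" "pairwise disjnt P" "\<And>A. A \<in> P \<Longrightarrow> 2 \<le> card A"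
  shows "2 * card P \<le> card (\<Union>P)"
proof -
  have "finite P" "\<And>A. A \<in> P \<Longrightarrow> finite A"
    using assms(1) finite_UnionD by (blast intro: finite_subset)+
  then have "card (\<Union>P) = (\<Sum>A\<in>P. card A)" using assms(2) by (simp add: card_Union_disjoint)
  also have "\<dots> \<ge> (\<Sum>A\<in>P. 2)" by (rule sum_mono) (rule assms(3))
  finally show ?thesis by (simp add: mult.commute)
qed

lemma class_map_pairwise_disjnt:
  assumes "class_map V cls"
  shows "pairwise disjnt (cls ` V)"
proof (rule pairwiseI, clarify)
  fix u v assume uv: "u \<in> V" "v \<in> V" "cls u \<noteq> cls v"
  show "disjnt (cls u) (cls v)"
    unfolding disjnt_iff
  proof (intro allI notI, elim conjE)
    fix w assume "w \<in> cls u" "w \<in> cls v"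
    with assms uv have "cls w = cls u" "cls w = cls v"
      unfolding class_map_def by blast+
    with uv show False by simp
  qed
qed

lemma class_map_Union: "class_map V cls \<Longrightarrow> \<Union> (cls ` V) = V"
  unfolding class_map_def by blast

lemma two_mul_num_classes_le_card:
  assumes "finite V" "\<not> yes_cond V E t k"
  shows "2 * num_classes V E t k \<le> card V"
proof -
  let ?cls = "classes_after V E t k"
  have cm: "class_map V ?cls" by (rule class_map_classes_after)
  have "2 \<le> card (?cls v)" if "v \<in> V" for v
  proof -
    have "?cls v \<noteq> {}" "finite (?cls v)"
      using cm that assms(1) unfolding class_map_def by (auto intro: finite_subset)
    moreover have "card (?cls v) \<noteq> 1" using assms(2) that unfolding yes_cond_def by blast
    ultimately show ?thesis by (metis One_nat_def card_0_eq less_2_cases not_less)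
  qed
  then have "2 * card (?cls ` V) \<le> card (\<Union> (?cls ` V))"
    using assms(1) class_map_pairwise_disjnt[OF cm]
    by (intro card_Union_ge_two_mul_card) (auto simp: class_map_Union[OF cm])
  then show ?thesis by (simp add: num_classes_def class_map_Union[OF cm])
qed

theorem lemma1:
  fixes V :: "'a set" and E :: "'a \<Rightarrow> 'a \<Rightarrow> bool" and t :: "'a \<Rightarrow> nat"
  assumes "configuration V E t"
  shows "\<exists>i \<in> {1..(card V + 1) div 2}. yes_cond V E t i \<or> no_cond V E t i"
proof (rule ccontr)
  assume none: "\<not> ?thesis"
  define K where "K = (card V + 1) div 2"
  have fin: "finite V" and ne: "V \<noteq> {}" using assms unfolding configuration_def by auto
  then have "1 \<le> K" unfolding K_def by (simp add: card_gt_0_iff Suc_le_eq)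
  then have "\<not> yes_cond V E t K" using none unfolding K_def by auto
  with fin have "2 * num_classes V E t K \<le> card V"
    by (rule two_mul_num_classes_le_card)
  moreover have "K + 1 \<le> num_classes V E t K"
    using fin ne none unfolding K_def by (intro num_classes_ge_if_not_no_cond) auto
  ultimately show False unfolding K_def by linarith
qed

end
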